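(* For $0\le k\le n$, $$\alpha_{H_n^k}\cong \omega_{n,k}\big\uparrow^{S_n\times S_n}_{(S_k\times S_{n-k})\times(S_k\times S_{n-k})}.$$
   Context: Permutations are composed as functions, and $\pi\in S_n$ is identified with the permutation matrix whose $(i,j)$ entry is $1$ iff $i=\pi(j)$. $U_{n,k}$ is the $n\times n$ $(0,1)$-matrix whose upper left $k\times k$ block is upper triangular with all entries on and above the diagonal equal to $1$, whose upper right $k\times(n-k)$ block has all entries $1$, whose lower left block is zero and whose lower right block is $I_{n-k}$. $H_n^k=\{\pi U_{n,k}\sigma\mid\pi,\sigma\in S_n\}$, and $\alpha_{H_n^k}$ is the complex permutation representation of $S_n\times S_n$ on the space with basis $H_n^k$ given by $(\pi,\sigma)\bullet A=\pi A\sigma^{-1}$. $S_k\times S_{n-k}\le S_n$ is the subgroup of permutations preserving $\{1,\dots,k\}$ (and hence $\{k+1,\dots,n\}$). $W_n^k=\{\pi U_{n,k}\sigma\mid \pi,\sigma\in S_k\times S_{n-k}\}$ is the orbit of $U_{n,k}$ under the restricted action of $(S_k\times S_{n-k})\times(S_k\times S_{n-k})$, and $\omega_{n,k}$ is the corresponding permutation representation of $(S_k\times S_{n-k})\times(S_k\times S_{n-k})$ on the space with basis $W_n^k$. *)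

theory Defs
  imports "Jordan_Normal_Form.Matrix" "HOL-Algebra.Sym_Groups"
begin

definition rep_iso :: "('g, 'b) monoid_scheme \<Rightarrow> ('g \<Rightarrow> complex mat) \<Rightarrow> ('g \<Rightarrow> complex mat) \<Rightarrow> bool" where
  "rep_iso G \<rho> \<sigma> = (\<exists>d P. P \<in> carrier_mat d d \<and> invertible_mat P \<and>
      (\<forall>g\<in>carrier G. \<rho> g \<in> carrier_mat d d \<and> \<sigma> g \<in> carrier_mat d d \<and> \<rho> g * P = P * \<sigma> g))"

definition enum_of :: "'a set \<Rightarrow> 'a list" where
  "enum_of X = (SOME xs. distinct xs \<and> set xs = X)"

definition perm_rep :: "('g \<Rightarrow> 'a \<Rightarrow> 'a) \<Rightarrow> 'a set \<Rightarrow> 'g \<Rightarrow> complex mat" where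
  "perm_rep act X g = (let xs = enum_of X in
     mat (length xs) (length xs) (\<lambda>(i, j). if xs ! i = act g (xs ! j) then 1 else 0))"

definition coset_reps :: "('g, 'b) monoid_scheme \<Rightarrow> 'g set \<Rightarrow> 'g list" where
  "coset_reps G H = (SOME ts. set ts \<subseteq> carrier G \<and>
      (\<forall>g\<in>carrier G. \<exists>!i. i < length ts \<and> inv\<^bsub>G\<^esub> (ts ! i) \<otimes>\<^bsub>G\<^esub> g \<in> H))"

definition induced_rep :: "('g, 'b) monoid_scheme \<Rightarrow> 'g set \<Rightarrow> ('g \<Rightarrow> complex mat) \<Rightarrow> 'g \<Rightarrow> complex mat" where
  "induced_rep G H \<rho> g = (let ts = coset_reps G H; m = length ts; d = dim_row (\<rho> \<one>\<^bsub>G\<^esub>) in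
     mat (m * d) (m * d) (\<lambda>(r, c).
       let i = r div d; a = r mod d; j = c div d; b = c mod d;
           h = inv\<^bsub>G\<^esub> (ts ! i) \<otimes>\<^bsub>G\<^esub> g \<otimes>\<^bsub>G\<^esub> (ts ! j)
       in if h \<in> H then \<rho> h $$ (a, b) else 0))"

text \<open>Permutation matrix of \<pi>: (i,j) entry 1 iff i = \<pi>(j), with rows/columns 1..n
  stored at positions 0..n-1.\<close>
definition perm_mat :: "nat \<Rightarrow> (nat \<Rightarrow> nat) \<Rightarrow> int mat" where
  "perm_mat n \<pi> = mat n n (\<lambda>(i, j). if i + 1 = \<pi> (j + 1) then 1 else 0)"

definition U_mat :: "nat \<Rightarrow> nat \<Rightarrow> int mat" where
  "U_mat n k = mat n n (\<lambda>(i, j).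
     if i < k \<and> j < k then (if i \<le> j then 1 else 0)
     else if i < k then 1
     else if j < k then 0
     else (if i = j then 1 else 0))"

definition SnSn :: "nat \<Rightarrow> ((nat \<Rightarrow> nat) \<times> (nat \<Rightarrow> nat)) monoid" where
  "SnSn n = sym_group n \<times>\<times> sym_group n"

definition two_sided_act :: "nat \<Rightarrow> (nat \<Rightarrow> nat) \<times> (nat \<Rightarrow> nat) \<Rightarrow> int mat \<Rightarrow> int mat" where
  "two_sided_act n g A = perm_mat n (fst g) * A * perm_mat n (inv\<^bsub>sym_group n\<^esub> (snd g))"

definition H_set :: "nat \<Rightarrow> nat \<Rightarrow> int mat set" where
  "H_set n k = {perm_mat n \<pi> * U_mat n k * perm_mat n \<sigma> | \<pi> \<sigma>.
                  \<pi> \<in> carrier (sym_group n) \<and> \<sigma> \<in> carrier (sym_group n)}"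

text \<open>S_k x S_{n-k}: permutations of {1..n} preserving {1..k}.\<close>
definition young_sub :: "nat \<Rightarrow> nat \<Rightarrow> (nat \<Rightarrow> nat) set" where
  "young_sub n k = {p \<in> carrier (sym_group n). p ` {1..k} = {1..k}}"

definition W_set :: "nat \<Rightarrow> nat \<Rightarrow> int mat set" where
  "W_set n k = {perm_mat n \<pi> * U_mat n k * perm_mat n \<sigma> | \<pi> \<sigma>.
                  \<pi> \<in> young_sub n k \<and> \<sigma> \<in> young_sub n k}"

definition alpha_rep :: "nat \<Rightarrow> nat \<Rightarrow> (nat \<Rightarrow> nat) \<times> (nat \<Rightarrow> nat) \<Rightarrow> complex mat" where
  "alpha_rep n k = perm_rep (two_sided_act n) (H_set n k)"

definition omega_rep :: "nat \<Rightarrow> nat \<Rightarrow> (nat \<Rightarrow> nat) \<times> (nat \<Rightarrow> nat) \<Rightarrow> complex mat" where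
  "omega_rep n k = perm_rep (two_sided_act n) (W_set n k)"

end

theory Submission
  imports Defs
begin

text \<open>
  \<open>H\<^sub>n\<^sup>k\<close> is the orbit of \<open>U\<^sub>n\<^sub>,\<^sub>k\<close> under the two-sided action of \<open>G = S\<^sub>n \<times> S\<^sub>n\<close>
  and \<open>W\<^sub>n\<^sup>k\<close> its orbit under \<open>K = (S\<^sub>k \<times> S\<^sub>n\<^sub>-\<^sub>k)\<^sup>2\<close>. Comparing entries of
  \<open>\<pi> U \<sigma>\<inverse> = U\<close> shows that \<open>\<pi>\<close> and \<open>\<sigma>\<close> must preserve \<open>{1..k}\<close>, so the stabiliser
  of \<open>U\<close> lies in \<open>K\<close>. Whenever the stabiliser of \<open>u\<close> lies in a subgroup \<open>H\<close>, the orbit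
  \<open>G u\<close> is the disjoint union of the translates \<open>t\<^sub>i (H u)\<close> over a left transversal
  \<open>(t\<^sub>i)\<close> of \<open>H\<close>; enumerating \<open>G u\<close> as \<open>t\<^sub>i w\<^sub>a\<close>, with \<open>(w\<^sub>a)\<close> an enumeration of \<open>H u\<close>,
  turns the permutation matrices of \<open>G u\<close> into exactly the block matrices of the
  representation induced from the permutation representation on \<open>H u\<close>.
\<close>

section \<open>Permutation matrices relative to enumerations\<close>

definition match_mat :: "nat \<Rightarrow> (nat \<Rightarrow> 'a) \<Rightarrow> (nat \<Rightarrow> 'a) \<Rightarrow> complex mat" where
  "match_mat N x y = mat N N (\<lambda>(i, j). if x i = y j then 1 else 0)"

lemma match_mat_carrier [simp]: "match_mat N x y \<in> carrier_mat N N"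
  by (simp add: match_mat_def)

lemma mat_mult_match_mat:
  assumes x: "bij_betw x {0..<N} X" and y: "y ` {0..<N} \<subseteq> X"
  shows "mat N N (\<lambda>(i, l). F i (x l)) * match_mat N x y = mat N N (\<lambda>(i, j). F i (y j))"
proof (rule eq_matI)
  fix i j assume "i < dim_row (mat N N (\<lambda>(i, j). F i (y j)))" "j < dim_col (mat N N (\<lambda>(i, j). F i (y j)))"
  then have i: "i < N" and j: "j < N" by simp_all
  obtain l0 where l0: "l0 < N" "x l0 = y j"
    using x y j unfolding bij_betw_def by (metis atLeastLessThan_iff image_subset_iff imageE zero_le)
  have x_eq: "x l = y j \<longleftrightarrow> l = l0" if "l < N" for l
    using x l0 that unfolding bij_betw_def inj_on_def by auto
  have "(mat N N (\<lambda>(i, l). F i (x l)) * match_mat N x y) $$ (i, j)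
      = (\<Sum>l\<in>{0..<N}. F i (x l) * (if x l = y j then 1 else 0))"
    using i j by (simp add: match_mat_def scalar_prod_def)
  also have "\<dots> = (\<Sum>l\<in>{0..<N}. if l = l0 then F i (y j) else 0)"
    by (rule sum.cong) (auto simp: x_eq l0(2))
  finally show "(mat N N (\<lambda>(i, l). F i (x l)) * match_mat N x y) $$ (i, j)
      = mat N N (\<lambda>(i, j). F i (y j)) $$ (i, j)"
    using i j l0(1) by simp
qed (simp_all add: match_mat_def)

lemma match_mat_mult:
  assumes "bij_betw y {0..<N} X" and "z ` {0..<N} \<subseteq> X"
  shows "match_mat N x y * match_mat N y z = match_mat N x z"
  using mat_mult_match_mat[OF assms, of "\<lambda>i w. if x i = w then 1 else 0"]
  by (simp add: match_mat_def)

lemma match_mat_self: "inj_on x {0..<N} \<Longrightarrow> match_mat N x x = 1\<^sub>m N"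
  by (rule eq_matI) (auto simp: match_mat_def inj_on_def)

lemma match_mat_invertible:
  assumes x: "bij_betw x {0..<N} X" and y: "bij_betw y {0..<N} X"
  shows "invertible_mat (match_mat N x y)"
proof -
  have "match_mat N x y * match_mat N y x = 1\<^sub>m N"
    using match_mat_mult[OF y] match_mat_self x by (metis bij_betw_def equalityD1)
  moreover have "match_mat N y x * match_mat N x y = 1\<^sub>m N"
    using match_mat_mult[OF x] match_mat_self y by (metis bij_betw_def equalityD1)
  ultimately show ?thesis
    unfolding invertible_mat_def inverts_mat_def by (auto simp: match_mat_def)
qed

lemma match_mat_similar:
  assumes x: "bij_betw x {0..<N} X" and y: "bij_betw y {0..<N} X" and f: "f ` X \<subseteq> X"
  shows "match_mat N x (f \<circ> x) * match_mat N x y = match_mat N x y * match_mat N y (f \<circ> y)"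
proof -
  have yX: "y ` {0..<N} \<subseteq> X" and fyX: "(f \<circ> y) ` {0..<N} \<subseteq> X"
    using y f by (auto simp: bij_betw_def)
  have "match_mat N x (f \<circ> x) * match_mat N x y = match_mat N x (f \<circ> y)"
    using mat_mult_match_mat[OF x yX, of "\<lambda>i w. if x i = f w then 1 else 0"]
    by (simp add: match_mat_def)
  also have "\<dots> = match_mat N x y * match_mat N y (f \<circ> y)"
    by (rule match_mat_mult[OF y fyX, symmetric])
  finally show ?thesis .
qed

lemma rep_iso_of_enumerations:
  assumes x: "bij_betw x {0..<N} X" and y: "bij_betw y {0..<N} X"
    and closed: "\<And>g. g \<in> carrier G \<Longrightarrow> act g ` X \<subseteq> X"
    and \<rho>: "\<And>g. g \<in> carrier G \<Longrightarrow> \<rho> g = match_mat N x (act g \<circ> x)"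
    and \<sigma>: "\<And>g. g \<in> carrier G \<Longrightarrow> \<sigma> g = match_mat N y (act g \<circ> y)"
  shows "rep_iso G \<rho> \<sigma>"
  unfolding rep_iso_def
  using match_mat_invertible[OF x y] match_mat_similar[OF x y closed] \<rho> \<sigma>
  by (intro exI[of _ N] exI[of _ "match_mat N x y"]) simp

lemma enum_of:
  assumes "finite X" shows "distinct (enum_of X)" "set (enum_of X) = X"
proof -
  have "\<exists>xs. distinct xs \<and> set xs = X" using finite_distinct_list[OF assms] by blast
  then have "distinct (enum_of X) \<and> set (enum_of X) = X" unfolding enum_of_def by (rule someI_ex)
  then show "distinct (enum_of X)" "set (enum_of X) = X" by auto
qed

lemma length_enum_of: "finite X \<Longrightarrow> length (enum_of X) = card X"
  using enum_of distinct_card by metis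

lemma bij_betw_enum_of: "finite X \<Longrightarrow> bij_betw ((!) (enum_of X)) {0..<card X} X"
  using bij_betw_nth[OF enum_of(1)] enum_of(2) length_enum_of by (metis atLeast0LessThan)

lemma perm_rep_eq_match_mat:
  "finite X \<Longrightarrow> perm_rep act X g = match_mat (card X) ((!) (enum_of X)) (act g \<circ> (!) (enum_of X))"
  by (simp add: perm_rep_def match_mat_def length_enum_of Let_def)

section \<open>Permutation representations induced from a subgroup\<close>

lemma bij_betw_div_mod:
  fixes m d :: nat
  shows "bij_betw (\<lambda>r. (r div d, r mod d)) {0..<m * d} ({0..<m} \<times> {0..<d})"
proof (rule bij_betw_byWitness[where f' = "\<lambda>(i, a). i * d + a"])
  show "(\<lambda>r. (r div d, r mod d)) ` {0..<m * d} \<subseteq> {0..<m} \<times> {0..<d}"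
    by (auto simp: less_mult_imp_div_less) (metis mod_less_divisor mult_0_right neq0_conv not_less0)
  have "i * d + a < m * d" if "i < m" "a < d" for i a
  proof -
    have "i * d + a < (i + 1) * d" using that by simp
    also have "\<dots> \<le> m * d" using that by (intro mult_right_mono) auto
    finally show ?thesis .
  qed
  then show "(\<lambda>(i, a). i * d + a) ` ({0..<m} \<times> {0..<d}) \<subseteq> {0..<m * d}" by auto
qed auto

lemma (in group) left_transversal_exists:
  assumes "subgroup H G" and "finite (carrier G)"
  shows "\<exists>ts. set ts \<subseteq> carrier G \<and> (\<forall>g\<in>carrier G. \<exists>!i. i < length ts \<and> inv (ts ! i) \<otimes> g \<in> H)"
proof -
  let ?Q = "carrier G // rcong H"
  have equiv: "equiv (carrier G) (rcong H)"
    by (rule subgroup.equiv_rcong[OF assms(1) is_group])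
  define rep where "rep C = (SOME t. t \<in> C)" for C :: "'a set"
  have rep: "rep C \<in> C" if "C \<in> ?Q" for C
    using in_quotient_imp_non_empty[OF equiv that] unfolding rep_def by (simp add: some_in_eq)
  have finQ: "finite (rep ` ?Q)"
    using finite_quotient[OF assms(2) equiv_type[OF equiv]] by simp
  define ts where "ts = enum_of (rep ` ?Q)"
  have rep_rcong_iff: "(rep C, g) \<in> rcong H \<longleftrightarrow> rep C = rep (rcong H `` {g})"
    if C: "C \<in> ?Q" and g: "g \<in> carrier G" for C g
  proof
    assume "(rep C, g) \<in> rcong H"
    then have "C = rcong H `` {g}"
      using quotient_eq_iff[OF equiv C quotientI[OF g] rep[OF C]] equiv_class_self[OF equiv g] by simp
    then show "rep C = rep (rcong H `` {g})" by simp
  next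
    assume "rep C = rep (rcong H `` {g})"
    then have "(g, rep C) \<in> rcong H" using rep[OF quotientI[OF g]] by simp
    then show "(rep C, g) \<in> rcong H" using equiv by (meson equivE symD)
  qed
  show ?thesis
  proof (intro exI[of _ ts] conjI ballI)
    show "set ts \<subseteq> carrier G"
      using rep in_quotient_imp_subset[OF equiv] enum_of(2)[OF finQ] by (force simp: ts_def)
  next
    fix g assume g: "g \<in> carrier G"
    have iff: "i < length ts \<and> inv (ts ! i) \<otimes> g \<in> H \<longleftrightarrow>
        i < length ts \<and> ts ! i = rep (rcong H `` {g})" for i
    proof (cases "i < length ts")
      case True
      obtain C where C: "C \<in> ?Q" "ts ! i = rep C"
        using enum_of(2)[OF finQ] nth_mem True unfolding ts_def by blast
      then show ?thesis
        using rep_rcong_iff[OF C(1) g] rep[OF C(1)] in_quotient_imp_subset[OF equiv C(1)] g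
        by (auto simp: r_congruent_def)
    qed simp
    have "\<exists>!i. i < length ts \<and> ts ! i = rep (rcong H `` {g})"
      unfolding ts_def by (rule distinct_Ex1) (use enum_of[OF finQ] quotientI[OF g] in auto)
    then show "\<exists>!i. i < length ts \<and> inv (ts ! i) \<otimes> g \<in> H" by (simp only: iff)
  qed
qed

locale group_action_on = group G for G (structure) +
  fixes act :: "'a \<Rightarrow> 'x \<Rightarrow> 'x" and Y :: "'x set"
  assumes act_one: "x \<in> Y \<Longrightarrow> act \<one> x = x"
    and act_mult: "\<lbrakk>g \<in> carrier G; h \<in> carrier G; x \<in> Y\<rbrakk> \<Longrightarrow> act (g \<otimes> h) x = act g (act h x)"
    and act_closed: "\<lbrakk>g \<in> carrier G; x \<in> Y\<rbrakk> \<Longrightarrow> act g x \<in> Y"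
begin

lemma act_inv_act: "\<lbrakk>g \<in> carrier G; x \<in> Y\<rbrakk> \<Longrightarrow> act (inv g) (act g x) = x"
  using act_mult[of "inv g" g x] act_one by simp

lemma act_cancel: "\<lbrakk>g \<in> carrier G; x \<in> Y; x' \<in> Y\<rbrakk> \<Longrightarrow> act g x = act g x' \<longleftrightarrow> x = x'"
  by (metis act_inv_act)

end

locale stabilizer_in_subgroup = group_action_on +
  fixes H :: "'a set" and u :: 'x
  assumes finite_carrier: "finite (carrier G)"
    and subgroup_H: "subgroup H G"
    and u_in_Y: "u \<in> Y"
    and stabilizer_subset: "\<lbrakk>g \<in> carrier G; act g u = u\<rbrakk> \<Longrightarrow> g \<in> H"
begin

abbreviation X :: "'x set" where "X \<equiv> (\<lambda>g. act g u) ` carrier G"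
abbreviation W :: "'x set" where "W \<equiv> (\<lambda>g. act g u) ` H"

lemma H_subset: "H \<subseteq> carrier G"
  using subgroup.subset[OF subgroup_H] .

lemma X_subset_Y: "X \<subseteq> Y"
  using act_closed u_in_Y by auto

lemma W_subset_X: "W \<subseteq> X"
  using H_subset by auto

lemma finite_X: "finite X" and finite_W: "finite W"
  using finite_carrier H_subset finite_subset by auto

lemma act_in_X:
  assumes g: "g \<in> carrier G" and "x \<in> X"
  shows "act g x \<in> X"
proof -
  obtain g' where g': "g' \<in> carrier G" "x = act g' u" using assms by blast
  then have "act g x = act (g \<otimes> g') u" using g u_in_Y by (simp add: act_mult)
  then show ?thesis using g g' by blast
qed

lemma mem_H_if_act_W:
  assumes g: "g \<in> carrier G" and "w \<in> W" and "act g w \<in> W"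
  shows "g \<in> H"
proof -
  obtain h h' where h: "h \<in> H" "w = act h u" and h': "h' \<in> H" "act g w = act h' u"
    using assms by auto
  have hG: "h \<in> carrier G" "h' \<in> carrier G" using h h' H_subset by auto
  have "act (inv h' \<otimes> g \<otimes> h) u = act (inv h') (act g w)"
    using hG g u_in_Y act_closed by (simp add: act_mult h(2))
  also have "\<dots> = u" using h'(2) hG u_in_Y by (simp add: act_inv_act)
  finally have "inv h' \<otimes> g \<otimes> h \<in> H" using hG g by (intro stabilizer_subset) auto
  moreover have "g = h' \<otimes> (inv h' \<otimes> g \<otimes> h) \<otimes> inv h"
    using hG g by (simp add: m_assoc[symmetric], simp add: m_assoc)
  ultimately show ?thesis
    using h h' subgroup_H by (metis subgroup.m_closed subgroup.m_inv_closed)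
qed

abbreviation ts :: "'a list" where "ts \<equiv> coset_reps G H"
abbreviation ws :: "'x list" where "ws \<equiv> enum_of W"

lemma coset_reps_transversal:
  "set ts \<subseteq> carrier G" "g \<in> carrier G \<Longrightarrow> \<exists>!i. i < length ts \<and> inv (ts ! i) \<otimes> g \<in> H"
proof -
  have "set ts \<subseteq> carrier G \<and> (\<forall>g\<in>carrier G. \<exists>!i. i < length ts \<and> inv (ts ! i) \<otimes> g \<in> H)"
    unfolding coset_reps_def
    by (rule someI_ex) (rule left_transversal_exists[OF subgroup_H finite_carrier])
  then show "set ts \<subseteq> carrier G" "g \<in> carrier G \<Longrightarrow> \<exists>!i. i < length ts \<and> inv (ts ! i) \<otimes> g \<in> H"
    by auto
qed

lemma coset_rep_carrier: "i < length ts \<Longrightarrow> ts ! i \<in> carrier G"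
  using coset_reps_transversal(1) nth_mem by blast

lemma nth_enum_W: "a < card W \<Longrightarrow> ws ! a \<in> W"
  using enum_of(2)[OF finite_W] length_enum_of[OF finite_W] nth_mem by metis

lemma nth_enum_W_in_Y: "a < card W \<Longrightarrow> ws ! a \<in> Y"
  using nth_enum_W W_subset_X X_subset_Y by blast

lemma transversal_act_inj:
  assumes ij: "i < length ts" "j < length ts" and ab: "a < card W" "b < card W"
    and eq: "act (ts ! i) (ws ! a) = act (ts ! j) (ws ! b)"
  shows "i = j \<and> a = b"
proof -
  have G: "ts ! i \<in> carrier G" "ts ! j \<in> carrier G" using ij coset_rep_carrier by auto
  have "act (inv (ts ! j) \<otimes> ts ! i) (ws ! a) = ws ! b"
    using eq G ab nth_enum_W_in_Y by (simp add: act_mult act_inv_act)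
  then have "inv (ts ! j) \<otimes> ts ! i \<in> H"
    using G ab nth_enum_W by (intro mem_H_if_act_W) auto
  moreover have "inv (ts ! i) \<otimes> ts ! i \<in> H"
    using G subgroup.one_closed[OF subgroup_H] by simp
  ultimately have "i = j" using coset_reps_transversal(2)[OF G(1)] ij by blast
  then have "ws ! a = ws ! b" using eq G ab nth_enum_W_in_Y act_cancel by simp
  then show "i = j \<and> a = b"
    using \<open>i = j\<close> ab enum_of(1)[OF finite_W] length_enum_of[OF finite_W] nth_eq_iff_index_eq
    by metis
qed

lemma transversal_bij:
  "bij_betw (\<lambda>(i, a). act (ts ! i) (ws ! a)) ({0..<length ts} \<times> {0..<card W}) X"
  unfolding bij_betw_def
proof (intro conjI subset_antisym)
  show "inj_on (\<lambda>(i, a). act (ts ! i) (ws ! a)) ({0..<length ts} \<times> {0..<card W})"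
    using transversal_act_inj by (intro inj_onI) auto
  show "(\<lambda>(i, a). act (ts ! i) (ws ! a)) ` ({0..<length ts} \<times> {0..<card W}) \<subseteq> X"
  proof (clarsimp simp del: image_iff)
    fix i a assume "i < length ts" "a < card W"
    then show "act (ts ! i) (ws ! a) \<in> X"
      using act_in_X[OF coset_rep_carrier] nth_enum_W W_subset_X by (meson subsetD)
  qed
  show "X \<subseteq> (\<lambda>(i, a). act (ts ! i) (ws ! a)) ` ({0..<length ts} \<times> {0..<card W})"
  proof
    fix x assume "x \<in> X"
    then obtain g where g: "g \<in> carrier G" "x = act g u" by blast
    then obtain i where i: "i < length ts" "inv (ts ! i) \<otimes> g \<in> H" using coset_reps_transversal(2) by blast
    have t: "ts ! i \<in> carrier G" using i coset_rep_carrier by blast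
    have "act (inv (ts ! i) \<otimes> g) u \<in> W" using i by blast
    then obtain a where a: "a < card W" "ws ! a = act (inv (ts ! i) \<otimes> g) u"
      using enum_of(2)[OF finite_W] length_enum_of[OF finite_W] by (metis in_set_conv_nth)
    have "x = act (ts ! i) (ws ! a)"
      using a g t u_in_Y by (simp add: act_mult[symmetric] m_assoc[symmetric])
    with i a show "x \<in> (\<lambda>(i, a). act (ts ! i) (ws ! a)) ` ({0..<length ts} \<times> {0..<card W})"
      by force
  qed
qed

definition induced_basis :: "nat \<Rightarrow> 'x" where
  "induced_basis r = act (ts ! (r div card W)) (ws ! (r mod card W))"

lemma induced_basis_bij: "bij_betw induced_basis {0..<length ts * card W} X"
proof -
  have "induced_basis = (\<lambda>(i, a). act (ts ! i) (ws ! a)) \<circ> (\<lambda>r. (r div card W, r mod card W))"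
    by (auto simp: induced_basis_def)
  then show ?thesis using bij_betw_trans[OF bij_betw_div_mod transversal_bij] by simp
qed

text \<open>The conjunct \<open>h \<in> H\<close> is redundant (by mem_H_if_act_W); with it, the right-hand
  side is literally the \<open>(i, j)\<close> block entry of the induced representation.\<close>
lemma act_transversal_iff:
  assumes g: "g \<in> carrier G" and ij: "i < length ts" "j < length ts" and ab: "a < card W" "b < card W"
  defines "h \<equiv> inv (ts ! i) \<otimes> g \<otimes> ts ! j"
  shows "act (ts ! i) (ws ! a) = act g (act (ts ! j) (ws ! b)) \<longleftrightarrow> h \<in> H \<and> ws ! a = act h (ws ! b)"
proof -
  have G: "ts ! i \<in> carrier G" "ts ! j \<in> carrier G" using ij coset_rep_carrier by auto
  have "act g (act (ts ! j) (ws ! b)) = act (ts ! i) (act h (ws ! b))"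
    using G g ab nth_enum_W_in_Y by (simp add: h_def act_mult[symmetric] m_assoc[symmetric])
  then have "act (ts ! i) (ws ! a) = act g (act (ts ! j) (ws ! b)) \<longleftrightarrow> ws ! a = act h (ws ! b)"
    using G g ab nth_enum_W_in_Y act_closed by (simp add: act_cancel h_def)
  moreover have "h \<in> H" if "ws ! a = act h (ws ! b)"
  proof (rule mem_H_if_act_W)
    show "h \<in> carrier G" using G g by (simp add: h_def)
    show "ws ! b \<in> W" "act h (ws ! b) \<in> W" using nth_enum_W ab that by metis+
  qed
  ultimately show ?thesis by blast
qed

lemma induced_rep_eq_match_mat:
  assumes g: "g \<in> carrier G"
  shows "induced_rep G H (perm_rep act W) g
    = match_mat (length ts * card W) induced_basis (act g \<circ> induced_basis)"
proof -
  have dim: "dim_row (perm_rep act W \<one>) = card W"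
    by (simp add: perm_rep_eq_match_mat[OF finite_W] match_mat_def)
  have entry: "perm_rep act W h $$ (a, b) = (if ws ! a = act h (ws ! b) then 1 else 0)"
    if "a < card W" "b < card W" for h a b
    using that by (simp add: perm_rep_eq_match_mat[OF finite_W] match_mat_def)
  have "r div card W < length ts" "r mod card W < card W" if "r < length ts * card W" for r
    using bij_betwE[OF bij_betw_div_mod] that by auto
  then show ?thesis
    unfolding induced_rep_def Let_def dim
    by (intro eq_matI) (auto simp: match_mat_def induced_basis_def entry act_transversal_iff[OF g])
qed

theorem perm_rep_iso_induced: "rep_iso G (perm_rep act X) (induced_rep G H (perm_rep act W))"
proof -
  have card: "card X = length ts * card W"
    using bij_betw_same_card[OF induced_basis_bij] by simp
  show ?thesis
  proof (rule rep_iso_of_enumerations[OF bij_betw_enum_of[OF finite_X] induced_basis_bij[folded card]])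
    show "act g ` X \<subseteq> X" if "g \<in> carrier G" for g using act_in_X that by blast
    show "perm_rep act X g = match_mat (card X) ((!) (enum_of X)) (act g \<circ> (!) (enum_of X))" for g
      by (rule perm_rep_eq_match_mat[OF finite_X])
    show "induced_rep G H (perm_rep act W) g = match_mat (card X) induced_basis (act g \<circ> induced_basis)"
      if "g \<in> carrier G" for g
      using induced_rep_eq_match_mat[OF that] card by simp
  qed
qed

end

section \<open>The two-sided action of \<open>S\<^sub>n \<times> S\<^sub>n\<close> on \<open>n \<times> n\<close> matrices\<close>

lemma perm_mat_carrier [simp]: "perm_mat n p \<in> carrier_mat n n"
  by (simp add: perm_mat_def)

lemma perm_mat_mult_index:
  assumes p: "p permutes {1..n}" and A: "A \<in> carrier_mat n m" and i: "i < n" and j: "j < m"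
  shows "(perm_mat n p * A) $$ (i, j) = A $$ (inv' p (Suc i) - 1, j)"
proof -
  define l0 where "l0 = inv' p (Suc i) - 1"
  have "inv' p (Suc i) \<in> {1..n}" using permutes_in_image[OF permutes_inv[OF p]] i by simp
  then have l0: "l0 < n" "Suc l0 = inv' p (Suc i)" by (auto simp: l0_def)
  have iff: "Suc i = p (Suc l) \<longleftrightarrow> l = l0" for l
    using l0(2) permutes_inverses[OF p] by (metis Suc_inject)
  have "(perm_mat n p * A) $$ (i, j) = (\<Sum>l\<in>{0..<n}. (if Suc i = p (Suc l) then 1 else 0) * A $$ (l, j))"
    using A i j by (simp add: perm_mat_def scalar_prod_def)
  also have "\<dots> = (\<Sum>l\<in>{0..<n}. if l = l0 then A $$ (l0, j) else 0)"
    by (rule sum.cong) (auto simp: iff)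
  finally show ?thesis using l0(1) by (simp add: l0_def)
qed

lemma mult_perm_mat_index:
  assumes q: "q permutes {1..n}" and A: "A \<in> carrier_mat m n" and i: "i < m" and j: "j < n"
  shows "(A * perm_mat n q) $$ (i, j) = A $$ (i, q (Suc j) - 1)"
proof -
  define l0 where "l0 = q (Suc j) - 1"
  have "q (Suc j) \<in> {1..n}" using permutes_in_image[OF q] j by simp
  then have l0: "l0 < n" "Suc l0 = q (Suc j)" by (auto simp: l0_def)
  have "(A * perm_mat n q) $$ (i, j) = (\<Sum>l\<in>{0..<n}. A $$ (i, l) * (if Suc l = q (Suc j) then 1 else 0))"
    using A i j by (simp add: perm_mat_def scalar_prod_def)
  also have "\<dots> = (\<Sum>l\<in>{0..<n}. if l = l0 then A $$ (i, l0) else 0)"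
    by (rule sum.cong) (use l0(2) in auto)
  finally show ?thesis using l0(1) by (simp add: l0_def)
qed

lemma perm_mat_mult:
  assumes p: "p permutes {1..n}" and q: "q permutes {1..n}"
  shows "perm_mat n p * perm_mat n q = perm_mat n (p \<circ> q)"
proof (rule eq_matI)
  fix i j assume "i < dim_row (perm_mat n (p \<circ> q))" "j < dim_col (perm_mat n (p \<circ> q))"
  then have i: "i < n" and j: "j < n" by (simp_all add: perm_mat_def)
  have "inv' p (Suc i) \<in> {1..n}" using permutes_in_image[OF permutes_inv[OF p]] i by simp
  then have l: "inv' p (Suc i) - 1 < n" "Suc (inv' p (Suc i) - 1) = inv' p (Suc i)" by auto
  have "(perm_mat n p * perm_mat n q) $$ (i, j) = perm_mat n q $$ (inv' p (Suc i) - 1, j)"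
    by (rule perm_mat_mult_index[OF p _ i j]) simp
  also have "\<dots> = (if inv' p (Suc i) = q (Suc j) then 1 else 0)"
    using l j by (simp add: perm_mat_def)
  also have "\<dots> = perm_mat n (p \<circ> q) $$ (i, j)"
  proof -
    have "inv' p (Suc i) = q (Suc j) \<longleftrightarrow> Suc i = p (q (Suc j))"
      using permutes_inverses[OF p] by metis
    then show ?thesis using i j by (simp add: perm_mat_def)
  qed
  finally show "(perm_mat n p * perm_mat n q) $$ (i, j) = perm_mat n (p \<circ> q) $$ (i, j)" .
qed (simp_all add: perm_mat_def)

lemma perm_mat_id: "perm_mat n id = 1\<^sub>m n"
  by (rule eq_matI) (auto simp: perm_mat_def)

lemma SnSn_group: "group (SnSn n)"
  unfolding SnSn_def by (rule DirProd_group[OF sym_group_is_group sym_group_is_group])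

lemma two_sided_action: "group_action_on (SnSn n) (two_sided_act n) (carrier_mat n n)"
proof (intro group_action_on.intro group_action_on_axioms.intro SnSn_group)
  show "two_sided_act n \<one>\<^bsub>SnSn n\<^esub> A = A" if "A \<in> carrier_mat n n" for A
    using that permutes_id[of "{1..n}"]
    by (simp add: SnSn_def two_sided_act_def sym_group_one sym_group_carrier perm_mat_id)
  show "two_sided_act n g A \<in> carrier_mat n n" for g A
    by (intro carrier_matI) (simp_all add: two_sided_act_def perm_mat_def)
  show "two_sided_act n (g \<otimes>\<^bsub>SnSn n\<^esub> h) A = two_sided_act n g (two_sided_act n h A)"
    if "g \<in> carrier (SnSn n)" "h \<in> carrier (SnSn n)" and A: "A \<in> carrier_mat n n" for g h A
  proof -
    obtain g1 g2 h1 h2 where gh: "g = (g1, g2)" "h = (h1, h2)" by fastforce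
    have perms: "g1 permutes {1..n}" "g2 permutes {1..n}" "h1 permutes {1..n}" "h2 permutes {1..n}"
      using that gh by (auto simp: SnSn_def sym_group_carrier)
    have inv_perms: "inv' g2 permutes {1..n}" "inv' h2 permutes {1..n}"
      using perms permutes_inv by blast+
    have "g \<otimes>\<^bsub>SnSn n\<^esub> h = (g1 \<circ> h1, g2 \<circ> h2)"
      by (simp add: gh SnSn_def sym_group_mult)
    moreover have "inv' (g2 \<circ> h2) = inv' h2 \<circ> inv' g2"
      using perms o_inv_distrib permutes_bij by blast
    ultimately have "two_sided_act n (g \<otimes>\<^bsub>SnSn n\<^esub> h) A
        = perm_mat n (g1 \<circ> h1) * A * perm_mat n (inv' h2 \<circ> inv' g2)"
      using permutes_compose[OF perms(4,2)] by (simp add: two_sided_act_def sym_group_carrier)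
    also have "\<dots> = (perm_mat n g1 * perm_mat n h1) * A * (perm_mat n (inv' h2) * perm_mat n (inv' g2))"
      using perms inv_perms by (simp add: perm_mat_mult)
    also have "\<dots> = perm_mat n g1 * (perm_mat n h1 * A * perm_mat n (inv' h2)) * perm_mat n (inv' g2)"
      using A by (simp add: assoc_mult_mat[of _ n n _ n _ n] mult_carrier_mat[of _ n n _ n])
    also have "\<dots> = two_sided_act n g (two_sided_act n h A)"
      using perms by (simp add: gh two_sided_act_def sym_group_carrier)
    finally show ?thesis .
  qed
qed

lemma two_sided_act_index:
  assumes \<pi>: "\<pi> permutes {1..n}" and \<sigma>: "\<sigma> permutes {1..n}" and A: "A \<in> carrier_mat n n"
    and a: "a \<in> {1..n}" and b: "b \<in> {1..n}"
  shows "two_sided_act n (\<pi>, \<sigma>) A $$ (\<pi> a - 1, \<sigma> b - 1) = A $$ (a - 1, b - 1)"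
proof -
  have \<pi>a: "Suc (\<pi> a - 1) = \<pi> a" "\<pi> a - 1 < n" and \<sigma>b: "Suc (\<sigma> b - 1) = \<sigma> b" "\<sigma> b - 1 < n"
    using permutes_in_image[OF \<pi>, of a] permutes_in_image[OF \<sigma>, of b] a b by auto
  have "two_sided_act n (\<pi>, \<sigma>) A = perm_mat n \<pi> * A * perm_mat n (inv' \<sigma>)"
    using \<sigma> by (simp add: two_sided_act_def sym_group_carrier)
  also have "\<dots> $$ (\<pi> a - 1, \<sigma> b - 1) = (perm_mat n \<pi> * A) $$ (\<pi> a - 1, inv' \<sigma> (Suc (\<sigma> b - 1)) - 1)"
    by (rule mult_perm_mat_index[OF permutes_inv[OF \<sigma>] _ \<pi>a(2) \<sigma>b(2)])
      (rule mult_carrier_mat[OF perm_mat_carrier A])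
  also have "\<dots> = (perm_mat n \<pi> * A) $$ (\<pi> a - 1, b - 1)"
    by (simp only: \<sigma>b(1) permutes_inverses(2)[OF \<sigma>])
  also have "\<dots> = A $$ (inv' \<pi> (Suc (\<pi> a - 1)) - 1, b - 1)"
    by (rule perm_mat_mult_index[OF \<pi> A \<pi>a(2)]) (use b in auto)
  also have "\<dots> = A $$ (a - 1, b - 1)"
    by (simp only: \<pi>a(1) permutes_inverses(2)[OF \<pi>])
  finally show ?thesis .
qed

lemma young_sub_subgroup: "subgroup (young_sub n k) (sym_group n)"
proof (rule group.subgroupI[OF sym_group_is_group])
  show "young_sub n k \<subseteq> carrier (sym_group n)" by (auto simp: young_sub_def)
  show "young_sub n k \<noteq> {}"
    using permutes_id by (auto simp: young_sub_def sym_group_carrier intro!: exI[of _ id])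
next
  fix p assume p: "p \<in> young_sub n k"
  then have "p permutes {1..n}" "p ` {1..k} = {1..k}" by (auto simp: young_sub_def sym_group_carrier)
  then have "inv' p ` {1..k} = {1..k}" using permutes_inj by (metis image_inv_f_f)
  then show "inv\<^bsub>sym_group n\<^esub> p \<in> young_sub n k"
    using p sym_group_inv_closed by (auto simp: young_sub_def)
next
  fix p q assume "p \<in> young_sub n k" "q \<in> young_sub n k"
  then have "p permutes {1..n}" "q permutes {1..n}" "p ` {1..k} = {1..k}" "q ` {1..k} = {1..k}"
    by (auto simp: young_sub_def sym_group_carrier)
  then have "p \<circ> q permutes {1..n}" "(p \<circ> q) ` {1..k} = {1..k}"
    using permutes_compose by (blast, metis image_comp)
  then show "p \<otimes>\<^bsub>sym_group n\<^esub> q \<in> young_sub n k"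
    by (simp add: young_sub_def sym_group_mult sym_group_carrier)
qed

text \<open>On 1-based positions the four blocks of \<open>U\<^sub>n\<^sub>,\<^sub>k\<close> collapse to a single rule.\<close>
definition U_support :: "nat \<Rightarrow> nat \<Rightarrow> nat \<Rightarrow> bool" where
  "U_support k a b \<longleftrightarrow> a = b \<or> (a \<le> k \<and> a \<le> b)"

lemma U_mat_index:
  assumes "a \<in> {1..n}" "b \<in> {1..n}"
  shows "U_mat n k $$ (a - 1, b - 1) = (if U_support k a b then 1 else 0)"
  using assms by (auto simp: U_mat_def U_support_def)

lemma U_mat_carrier [simp]: "U_mat n k \<in> carrier_mat n n"
  by (simp add: U_mat_def)

lemma young_sub_if_preserves_U_support:
  assumes k: "k \<le> n" and \<pi>: "\<pi> permutes {1..n}" and \<sigma>: "\<sigma> permutes {1..n}"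
    and preserves: "\<And>a b. a \<in> {1..n} \<Longrightarrow> b \<in> {1..n} \<Longrightarrow> U_support k (\<pi> a) (\<sigma> b) \<longleftrightarrow> U_support k a b"
  shows "\<pi> \<in> young_sub n k \<and> \<sigma> \<in> young_sub n k"
proof -
  have \<pi>_in: "\<pi> a \<in> {1..n}" if "a \<in> {1..n}" for a using permutes_in_image[OF \<pi>] that by simp
  have \<pi>_block: "\<pi> a \<le> k" if a: "a \<in> {1..k}" for a
    \<comment> \<open>otherwise row \<open>\<pi> a\<close> has a single 1, but row \<open>a\<close> has 1s in columns \<open>a\<close> and \<open>n\<close>\<close>
  proof (rule ccontr)
    assume "\<not> \<pi> a \<le> k"
    moreover have an: "a \<in> {1..n}" using a k by auto
    ultimately have "a < n" "n \<in> {1..n}" using a \<pi>_in by fastforce+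
    have "\<sigma> b = \<pi> a" if "b \<in> {1..n}" "a \<le> b" for b
      using preserves[OF an that(1)] that a \<open>\<not> \<pi> a \<le> k\<close> by (auto simp: U_support_def)
    then have "\<sigma> a = \<sigma> n" using an \<open>a < n\<close> \<open>n \<in> {1..n}\<close> by auto
    then show False using permutes_inj[OF \<sigma>] \<open>a < n\<close> by (metis injD less_irrefl)
  qed
  have \<sigma>_block: "\<sigma> b \<le> k" if b: "b \<in> {1..k}" for b
  proof (rule ccontr)
    assume "\<not> \<sigma> b \<le> k"
    define a where "a = inv' \<pi> (\<sigma> b)"
    have bn: "b \<in> {1..n}" using b k by auto
    have "\<pi> a = \<sigma> b" "a \<in> {1..n}"
      using permutes_inverses(1)[OF \<pi>] permutes_in_image[OF permutes_inv[OF \<pi>]]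
        permutes_in_image[OF \<sigma>] bn by (auto simp: a_def)
    then have "U_support k a b" using preserves[of a b] bn by (simp add: U_support_def)
    then have "a \<in> {1..k}" using b \<open>a \<in> {1..n}\<close> by (auto simp: U_support_def)
    then show False using \<pi>_block \<open>\<pi> a = \<sigma> b\<close> \<open>\<not> \<sigma> b \<le> k\<close> by metis
  qed
  have "\<pi> ` {1..k} = {1..k}"
    using \<pi>_block \<pi>_in k by (intro endo_inj_surj inj_on_subset[OF permutes_inj[OF \<pi>]]) auto
  moreover have "\<sigma> ` {1..k} = {1..k}"
    using \<sigma>_block permutes_in_image[OF \<sigma>] k
    by (intro endo_inj_surj inj_on_subset[OF permutes_inj[OF \<sigma>]]) fastforce+
  ultimately show ?thesis using \<pi> \<sigma> by (simp add: young_sub_def sym_group_carrier)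
qed

lemma stabilizer_U_subset_young:
  assumes k: "k \<le> n" and g: "g \<in> carrier (SnSn n)"
    and fixes_U: "two_sided_act n g (U_mat n k) = U_mat n k"
  shows "g \<in> young_sub n k \<times> young_sub n k"
proof -
  obtain \<pi> \<sigma> where g_eq: "g = (\<pi>, \<sigma>)" by fastforce
  have \<pi>: "\<pi> permutes {1..n}" and \<sigma>: "\<sigma> permutes {1..n}"
    using g g_eq by (auto simp: SnSn_def sym_group_carrier)
  have "U_support k (\<pi> a) (\<sigma> b) \<longleftrightarrow> U_support k a b" if a: "a \<in> {1..n}" and b: "b \<in> {1..n}" for a b
  proof -
    have \<pi>a: "\<pi> a \<in> {1..n}" and \<sigma>b: "\<sigma> b \<in> {1..n}"
      using permutes_in_image[OF \<pi>] permutes_in_image[OF \<sigma>] a b by simp_all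
    have "(if U_support k (\<pi> a) (\<sigma> b) then 1 else 0) = U_mat n k $$ (\<pi> a - 1, \<sigma> b - 1)"
      by (rule U_mat_index[OF \<pi>a \<sigma>b, symmetric])
    also have "\<dots> = two_sided_act n g (U_mat n k) $$ (\<pi> a - 1, \<sigma> b - 1)"
      by (simp only: fixes_U)
    also have "\<dots> = U_mat n k $$ (a - 1, b - 1)"
      unfolding g_eq by (rule two_sided_act_index[OF \<pi> \<sigma> U_mat_carrier a b])
    also have "\<dots> = (if U_support k a b then 1 else 0)"
      by (rule U_mat_index[OF a b])
    finally show ?thesis by (simp split: if_splits)
  qed
  then show ?thesis using young_sub_if_preserves_U_support[OF k \<pi> \<sigma>] by (simp add: g_eq)
qed

lemma two_sided_orbit:
  assumes "subgroup K (sym_group n)"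
  shows "{perm_mat n \<pi> * A * perm_mat n \<sigma> | \<pi> \<sigma>. \<pi> \<in> K \<and> \<sigma> \<in> K}
    = (\<lambda>g. two_sided_act n g A) ` (K \<times> K)"
proof -
  interpret K: subgroup K "sym_group n" by fact
  have inv_inv: "inv\<^bsub>sym_group n\<^esub> (inv\<^bsub>sym_group n\<^esub> \<sigma>) = \<sigma>" if "\<sigma> \<in> K" for \<sigma>
    using group.inv_inv[OF sym_group_is_group K.mem_carrier[OF that]] .
  show ?thesis
  proof (intro subset_antisym subsetI)
    fix x assume "x \<in> {perm_mat n \<pi> * A * perm_mat n \<sigma> | \<pi> \<sigma>. \<pi> \<in> K \<and> \<sigma> \<in> K}"
    then obtain \<pi> \<sigma> where x: "x = perm_mat n \<pi> * A * perm_mat n \<sigma>" and K: "\<pi> \<in> K" "\<sigma> \<in> K"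
      by blast
    have "x = two_sided_act n (\<pi>, inv\<^bsub>sym_group n\<^esub> \<sigma>) A"
      using x inv_inv[OF K(2)] by (simp add: two_sided_act_def)
    moreover have "(\<pi>, inv\<^bsub>sym_group n\<^esub> \<sigma>) \<in> K \<times> K" using K K.m_inv_closed by blast
    ultimately show "x \<in> (\<lambda>g. two_sided_act n g A) ` (K \<times> K)" by (rule image_eqI)
  next
    fix x assume "x \<in> (\<lambda>g. two_sided_act n g A) ` (K \<times> K)"
    then obtain \<pi> \<sigma> where "x = two_sided_act n (\<pi>, \<sigma>) A" and K: "\<pi> \<in> K" "\<sigma> \<in> K"
      by blast
    then have "x = perm_mat n \<pi> * A * perm_mat n (inv\<^bsub>sym_group n\<^esub> \<sigma>)"
      by (simp add: two_sided_act_def)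
    moreover have "inv\<^bsub>sym_group n\<^esub> \<sigma> \<in> K" by (rule K.m_inv_closed[OF K(2)])
    ultimately show "x \<in> {perm_mat n \<pi> * A * perm_mat n \<sigma> | \<pi> \<sigma>. \<pi> \<in> K \<and> \<sigma> \<in> K}"
      using K by blast
  qed
qed

lemma U_stabilizer_in_young:
  assumes "k \<le> n"
  shows "stabilizer_in_subgroup (SnSn n) (two_sided_act n) (carrier_mat n n)
    (young_sub n k \<times> young_sub n k) (U_mat n k)"
proof (intro stabilizer_in_subgroup.intro stabilizer_in_subgroup_axioms.intro two_sided_action)
  show "finite (carrier (SnSn n))"
    using finite_permutations[of "{1..n}"] by (simp add: SnSn_def sym_group_def)
  show "subgroup (young_sub n k \<times> young_sub n k) (SnSn n)"
    unfolding SnSn_def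
    by (rule DirProd_subgroups[OF sym_group_is_group young_sub_subgroup sym_group_is_group young_sub_subgroup])
  show "U_mat n k \<in> carrier_mat n n" by simp
qed (rule stabilizer_U_subset_young[OF assms])

theorem mainTheorem12:
  fixes n k :: nat
  assumes "k \<le> n"
  shows "rep_iso (SnSn n) (alpha_rep n k)
           (induced_rep (SnSn n) (young_sub n k \<times> young_sub n k) (omega_rep n k))"
proof -
  interpret stabilizer_in_subgroup "SnSn n" "two_sided_act n" "carrier_mat n n"
      "young_sub n k \<times> young_sub n k" "U_mat n k"
    using U_stabilizer_in_young[OF assms] .
  have "H_set n k = X"
    using two_sided_orbit[OF group.subgroup_self[OF sym_group_is_group]]
    by (simp add: H_set_def SnSn_def)
  moreover have "W_set n k = W"
    using two_sided_orbit[OF young_sub_subgroup] by (simp add: W_set_def)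
  ultimately show ?thesis
    using perm_rep_iso_induced by (simp add: alpha_rep_def omega_rep_def)
qed

end
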